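(* For all integers $n,h,b\ge0$, $G_n(h,b)=H_n(h,b)$, where $G_n(h,b)=|\mathcal{B}^{(h,b)}_{n+1}(231)|$ and $H_n(h,b)=|\mathcal{H}(n;h,b)|$. In particular, for every $n\ge1$, $|\mathcal{B}_n(231)|=C(\lfloor n/2\rfloor)\,C(\lfloor (n+1)/2\rfloor)$, where $C(m)=\frac{1}{m+1}\binom{2m}{m}$.
   Context: For integers $h,b\ge0$, a permutation $\pi\in\mathfrak{S}_{n+1}$ is an $(h,b)$-ballot permutation if the lattice path starting at $(0,h)$ whose $i$th step ($i\in[n]$) is $(1,1)$ if $\pi_i<\pi_{i+1}$ and $(1,-1)$ if $\pi_i>\pi_{i+1}$ ends at $(n,b)$ and never goes below the $x$-axis. Ballot permutations $\mathcal{B}_m$ are the $(0,b)$-ballot permutations in $\mathfrak{S}_m$ for some $b\ge0$ (every prefix has at most as many descents as ascents). $\mathcal{B}^{(h,b)}_{n+1}(231)$ (resp. $\mathcal{B}_m(231)$) denotes those with no subsequence order-isomorphic to $231$. A Gouyou-Beauchamps (GB) walk is a lattice path confined to $\{(x,y)\in\mathbb{N}^2: y\le x\}$ with steps from $\{(0,1),(0,-1),(-1,0),(1,0)\}$; $\mathcal{H}(n;h,b)$ is the set of $n$-step GB walks from $(h,0)$ to $(b,0)$. *)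

theory Defs
  imports Complex_Main
begin

definition is_perm :: "nat \<Rightarrow> nat list \<Rightarrow> bool" where
  "is_perm m p \<longleftrightarrow> length p = m \<and> distinct p \<and> set p = {1..m}"

definition path_height :: "nat \<Rightarrow> nat list \<Rightarrow> nat \<Rightarrow> int" where
  "path_height h p k = int h + (\<Sum>i<k. if p ! i < p ! (i+1) then 1 else -1)"

definition hb_ballot :: "nat \<Rightarrow> nat \<Rightarrow> nat \<Rightarrow> nat list \<Rightarrow> bool" where
  "hb_ballot n h b p \<longleftrightarrow> is_perm (n+1) p \<and>
     (\<forall>k\<le>n. path_height h p k \<ge> 0) \<and> path_height h p n = int b"

definition ballot_perm :: "nat \<Rightarrow> nat list \<Rightarrow> bool" where
  "ballot_perm m p \<longleftrightarrow> is_perm m p \<and> (\<forall>k\<le>m-1. path_height 0 p k \<ge> 0)"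

definition contains_231 :: "nat list \<Rightarrow> bool" where
  "contains_231 p \<longleftrightarrow> (\<exists>i j k. i < j \<and> j < k \<and> k < length p \<and> p ! k < p ! i \<and> p ! i < p ! j)"

definition G :: "nat \<Rightarrow> nat \<Rightarrow> nat \<Rightarrow> nat" where
  "G n h b = card {p. hb_ballot n h b p \<and> \<not> contains_231 p}"

text \<open>Gouyou-Beauchamps walks: a walk with n steps is the list of its n+1 visited points.\<close>
definition GB_region :: "int \<times> int \<Rightarrow> bool" where
  "GB_region q \<longleftrightarrow> 0 \<le> snd q \<and> snd q \<le> fst q"

definition GB_step :: "int \<times> int \<Rightarrow> int \<times> int \<Rightarrow> bool" where
  "GB_step q r \<longleftrightarrow> (fst r - fst q, snd r - snd q) \<in> {(0,1), (0,-1), (-1,0), (1,0)}"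

definition GB_walks :: "nat \<Rightarrow> nat \<Rightarrow> nat \<Rightarrow> (int \<times> int) list set" where
  "GB_walks n h b = {w. length w = n + 1 \<and> w ! 0 = (int h, 0) \<and> w ! n = (int b, 0) \<and>
     (\<forall>i\<le>n. GB_region (w ! i)) \<and> (\<forall>i<n. GB_step (w ! i) (w ! (i+1)))}"

definition H :: "nat \<Rightarrow> nat \<Rightarrow> nat \<Rightarrow> nat" where
  "H n h b = card (GB_walks n h b)"

definition catalan :: "nat \<Rightarrow> real" where
  "catalan m = (1 / real (m + 1)) * real (2 * m choose m)"

end

theory Submission
  imports Defs
begin

text \<open>Deleting the last entry of a 231-avoiding permutation and standardizing the rest leaves a
  231-avoiding permutation whose last entry is at most the deleted one, with equality exactly when
  the last step of the path is a descent. Refining \<open>G\<close> by the number \<open>a\<close> of entries above the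
  last one therefore gives a recursion: appending a descent raises \<open>a\<close> by one, appending an
  ascent may replace \<open>a\<close> by any value up to it. Weighted by \<open>a choose c\<close>, this refinement obeys
  the recursion of Gouyou-Beauchamps walks ending at \<open>(y + c, c)\<close>; the case \<open>c = 0\<close> is
  \<open>G = H\<close>.

  For \<open>h = 0\<close> the walks are counted by a Lindstroem-Gessel-Viennot determinant of reflected
  \<open>+1/-1\<close> walks. Along the x-axis this determinant is the difference of a potential at \<open>x\<close> and
  at \<open>x + 2\<close>, so the number of ballot permutations telescopes to a product of two binomial
  differences, each of which is a Catalan number.\<close>

definition shift_up :: "nat \<Rightarrow> nat \<Rightarrow> nat" where
  "shift_up v x = (if v \<le> x then x + 1 else x)"

definition shift_down :: "nat \<Rightarrow> nat \<Rightarrow> nat" where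
  "shift_down v x = (if v < x then x - 1 else x)"

definition append_entry :: "nat list \<Rightarrow> nat \<Rightarrow> nat list" where
  "append_entry q v = map (shift_up v) q @ [v]"

lemma shift_up_less_iff [simp]: "shift_up v x < shift_up v y \<longleftrightarrow> x < y"
  by (auto simp: shift_up_def)

lemma inj_shift_up: "inj (shift_up v)"
  by (auto simp: inj_def shift_up_def split: if_splits)

lemma length_append_entry [simp]: "length (append_entry q v) = Suc (length q)"
  by (simp add: append_entry_def)

lemma nth_append_entry: "i < length q \<Longrightarrow> append_entry q v ! i = shift_up v (q ! i)"
  by (simp add: append_entry_def nth_append)

lemma nth_length_append_entry [simp]: "append_entry q v ! length q = v"
  by (simp add: append_entry_def nth_append)

lemma last_append_entry [simp]: "last (append_entry q v) = v"
  by (simp add: append_entry_def)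

lemma inj_append_entry: "inj (\<lambda>q. append_entry q v)"
  using inj_shift_up by (auto simp: inj_def append_entry_def inj_map_eq_map)

lemma finite_is_perm: "finite {p. is_perm m p}"
proof (rule finite_subset)
  show "{p. is_perm m p} \<subseteq> {xs. set xs \<subseteq> {1..m} \<and> length xs = m}"
    by (auto simp: is_perm_def)
qed (simp add: finite_lists_length_eq)

lemma is_perm_last: "is_perm (Suc m) q \<Longrightarrow> last q = q ! m \<and> 1 \<le> last q \<and> last q \<le> Suc m"
  by (metis atLeastAtMost_iff diff_Suc_1 is_perm_def last_conv_nth last_in_set list.size(3)
      nat.distinct(1))

lemma shift_down_shift_up [simp]: "shift_down v (shift_up v x) = x"
  by (simp add: shift_up_def shift_down_def)

lemma shift_up_shift_down: "x \<noteq> v \<Longrightarrow> shift_up v (shift_down v x) = x"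
  by (auto simp: shift_up_def shift_down_def)

lemma image_shift_up_atLeastAtMost:
  assumes v: "1 \<le> v" "v \<le> Suc n"
  shows "shift_up v ` {1..n} = {1..Suc n} - {v}"
proof (intro equalityI subsetI)
  fix x assume x: "x \<in> {1..Suc n} - {v}"
  show "x \<in> shift_up v ` {1..n}"
  proof (cases "x < v")
    case True
    with x v show ?thesis by (auto simp: shift_up_def intro!: image_eqI[where x = x])
  next
    case False
    with x v show ?thesis by (auto simp: shift_up_def intro!: image_eqI[where x = "x - 1"])
  qed
qed (use v in \<open>auto simp: shift_up_def\<close>)

lemma is_perm_append_entry:
  assumes q: "is_perm (Suc m) q" and v: "1 \<le> v" "v \<le> Suc (Suc m)"
  shows "is_perm (Suc (Suc m)) (append_entry q v)"
proof -
  have "v \<notin> shift_up v ` {1..Suc m}"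
    by (auto simp: shift_up_def)
  then show ?thesis
    using q v image_shift_up_atLeastAtMost[OF v] inj_shift_up
    by (auto simp: is_perm_def append_entry_def distinct_map intro: inj_on_subset)
qed

lemma is_perm_SucE:
  assumes p: "is_perm (Suc (Suc m)) p"
  obtains q where "is_perm (Suc m) q" "p = append_entry q (last p)"
proof
  define v where "v = last p"
  define r where "r = butlast p"
  have "p \<noteq> []" using p by (auto simp: is_perm_def)
  then have pr: "p = r @ [v]" by (simp add: r_def v_def)
  then have "is_perm (Suc (Suc m)) (r @ [v])"
    using p by simp
  then have r: "length r = Suc m" "distinct r" "set r = {1..Suc (Suc m)} - {v}" "v \<notin> set r"
    and v: "1 \<le> v" "v \<le> Suc (Suc m)"
    unfolding is_perm_def by auto
  define q where "q = map (shift_down v) r"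
  have rq: "r = map (shift_up v) q"
  proof -
    have "map (shift_up v \<circ> shift_down v) r = r"
      by (rule map_idI) (use r(4) in \<open>auto intro: shift_up_shift_down\<close>)
    then show ?thesis by (simp add: q_def)
  qed
  show "p = append_entry q (last p)"
    by (simp add: pr rq append_entry_def)
  have "set r = shift_up v ` {1..Suc m}"
    using r(3) image_shift_up_atLeastAtMost[OF v] by simp
  then have "set q = {1..Suc m}"
    by (simp add: q_def image_image)
  moreover have "length q = Suc m" "distinct q"
    using r(1,2) rq by (simp_all add: distinct_map)
  ultimately show "is_perm (Suc m) q"
    by (simp add: is_perm_def)
qed

lemma contains_231_map:
  assumes "strict_mono f"
  shows "contains_231 (map f xs) \<longleftrightarrow> contains_231 xs"
proof -
  have "(i < j \<and> j < k \<and> k < length xs \<and>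
      map f xs ! k < map f xs ! i \<and> map f xs ! i < map f xs ! j) \<longleftrightarrow>
    (i < j \<and> j < k \<and> k < length xs \<and> xs ! k < xs ! i \<and> xs ! i < xs ! j)" for i j k
    using strict_mono_less[OF assms] by auto
  then show ?thesis by (simp add: contains_231_def)
qed

lemma contains_231_snoc:
  "contains_231 (xs @ [z]) \<longleftrightarrow>
     contains_231 xs \<or> (\<exists>i j. i < j \<and> j < length xs \<and> z < xs ! i \<and> xs ! i < xs ! j)"
  (is "?lhs \<longleftrightarrow> _ \<or> ?last")
proof
  assume ?lhs
  then obtain i j k where ijk: "i < j" "j < k" "k \<le> length xs"
    and o: "(xs @ [z]) ! k < (xs @ [z]) ! i" "(xs @ [z]) ! i < (xs @ [z]) ! j"
    by (auto simp: contains_231_def)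
  show "contains_231 xs \<or> ?last"
  proof (cases "k = length xs")
    case True
    then show ?thesis using ijk o by (auto simp: nth_append)
  next
    case False
    then have "k < length xs" using ijk by simp
    then show ?thesis using ijk o unfolding contains_231_def
      by (intro disjI1 exI[of _ i] exI[of _ j] exI[of _ k]) (simp add: nth_append)
  qed
next
  assume "contains_231 xs \<or> ?last"
  then show ?lhs
  proof
    assume "contains_231 xs"
    then obtain i j k where "i < j" "j < k" "k < length xs" "xs ! k < xs ! i" "xs ! i < xs ! j"
      by (auto simp: contains_231_def)
    then show ?lhs unfolding contains_231_def
      by (intro exI[of _ i] exI[of _ j] exI[of _ k]) (simp add: nth_append)
  next
    assume ?last
    then obtain i j where "i < j" "j < length xs" "z < xs ! i" "xs ! i < xs ! j" by blast
    then show ?lhs unfolding contains_231_def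
      by (intro exI[of _ i] exI[of _ j] exI[of _ "length xs"]) (simp add: nth_append)
  qed
qed

lemma contains_231_append_entry:
  assumes q: "is_perm (Suc m) q" and v: "1 \<le> v"
  shows "contains_231 (append_entry q v) \<longleftrightarrow> contains_231 q \<or> v < last q"
proof -
  have q': "length q = Suc m" "distinct q" "set q = {1..Suc m}" and lq: "last q = q ! m"
    using q is_perm_last[OF q] by (auto simp: is_perm_def)
  have "strict_mono (shift_up v)"
    by (simp add: strict_mono_def)
  moreover have "(i < j \<and> j < Suc m \<and> v < map (shift_up v) q ! i
      \<and> map (shift_up v) q ! i < map (shift_up v) q ! j) \<longleftrightarrow>
      (i < j \<and> j < Suc m \<and> v \<le> q ! i \<and> q ! i < q ! j)" for i j
    using q'(1) by (auto simp: shift_up_def split: if_splits)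
  ultimately have "contains_231 (append_entry q v) \<longleftrightarrow>
      contains_231 q \<or> (\<exists>i j. i < j \<and> j < Suc m \<and> v \<le> q ! i \<and> q ! i < q ! j)"
    by (simp add: append_entry_def contains_231_snoc contains_231_map q'(1))
  moreover have "(\<exists>i j. i < j \<and> j < Suc m \<and> v \<le> q ! i \<and> q ! i < q ! j) \<longleftrightarrow> v < last q"
    if "\<not> contains_231 q"
  proof
    assume "\<exists>i j. i < j \<and> j < Suc m \<and> v \<le> q ! i \<and> q ! i < q ! j"
    then obtain i j where ij: "i < j" "j < Suc m" "v \<le> q ! i" "q ! i < q ! j" by blast
    show "v < last q"
    proof (rule ccontr)
      assume "\<not> v < last q"
      moreover have "q ! i \<noteq> q ! m" using ij q' by (simp add: nth_eq_iff_index_eq)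
      ultimately have "q ! m < q ! i" using ij lq by simp
      with ij have "j < m" by (cases "j = m") auto
      with ij \<open>q ! m < q ! i\<close> q'(1) have "contains_231 q"
        unfolding contains_231_def by (intro exI[of _ i] exI[of _ j] exI[of _ m]) simp
      with that show False by contradiction
    qed
  next
    assume "v < last q"
    moreover have "last q \<le> Suc m" using is_perm_last[OF q] by simp
    ultimately have "v \<in> set q" using v q' by auto
    then obtain i where "i < Suc m" "q ! i = v" using q' by (metis in_set_conv_nth)
    moreover from this have "i \<noteq> m" using \<open>v < last q\<close> lq by auto
    ultimately show "\<exists>i j. i < j \<and> j < Suc m \<and> v \<le> q ! i \<and> q ! i < q ! j"
      using \<open>v < last q\<close> lq by (intro exI[of _ i] exI[of _ m]) simp
  qed
  ultimately show ?thesis by blast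
qed

lemma path_height_Suc:
  "path_height h p (Suc k) = path_height h p k + (if p ! k < p ! Suc k then 1 else -1)"
  by (simp add: path_height_def)

lemma path_height_le: "path_height h p k \<le> int h + int k"
  by (induction k) (simp_all add: path_height_Suc path_height_def)

lemma path_height_append_entry:
  assumes "length q = Suc m" "k \<le> m"
  shows "path_height h (append_entry q v) k = path_height h q k"
  unfolding path_height_def using assms
  by (intro arg_cong2[where f = "(+)"] sum.cong) (simp_all add: nth_append_entry)

lemma path_height_append_entry_last:
  assumes q: "is_perm (Suc m) q"
  shows "path_height h (append_entry q v) (Suc m) =
    path_height h q m + (if last q < v then 1 else -1)"
proof -
  have "length q = Suc m" "last q = q ! m" using q is_perm_last[OF q] by (auto simp: is_perm_def)
  moreover have "shift_up v x < v \<longleftrightarrow> x < v" for x by (simp add: shift_up_def)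
  ultimately show ?thesis
    using nth_length_append_entry[of q v]
    by (simp add: path_height_Suc path_height_append_entry nth_append_entry)
qed

section \<open>231-avoiding ballot permutations refined by their last entry\<close>

text \<open>\<open>a\<close> counts the entries of \<open>p\<close> that exceed its last entry.\<close>
definition ballot_avoiders :: "nat \<Rightarrow> nat \<Rightarrow> nat \<Rightarrow> nat \<Rightarrow> nat list set" where
  "ballot_avoiders h m y a = {p. is_perm (Suc m) p \<and> \<not> contains_231 p \<and>
     (\<forall>k\<le>m. 0 \<le> path_height h p k) \<and> path_height h p m = int y \<and> last p + a = Suc m}"

lemma finite_ballot_avoiders: "finite (ballot_avoiders h m y a)"
  by (rule finite_subset[OF _ finite_is_perm[of "Suc m"]]) (auto simp: ballot_avoiders_def)

lemma ballot_avoiders_eq_empty: "m < a \<Longrightarrow> ballot_avoiders h m y a = {}"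
  using is_perm_last by (fastforce simp: ballot_avoiders_def)

lemma is_perm_1: "is_perm (Suc 0) p \<longleftrightarrow> p = [1]"
proof
  assume "is_perm (Suc 0) p"
  then obtain x where "p = [x]" "set p = {1}" by (auto simp: is_perm_def length_Suc_conv)
  then show "p = [1]" by simp
qed (simp add: is_perm_def)
lemma ballot_avoiders_0: "ballot_avoiders h 0 y a = (if y = h \<and> a = 0 then {[1]} else {})"
  by (auto simp: ballot_avoiders_def is_perm_1 contains_231_def path_height_def)

lemma append_entry_in_ballot_avoiders_Suc:
  assumes q: "is_perm (Suc m) q" and v: "1 \<le> v" "v + a = Suc (Suc m)"
  shows "append_entry q v \<in> ballot_avoiders h (Suc m) y a \<longleftrightarrow>
    1 \<le> a \<and> q \<in> ballot_avoiders h m (Suc y) (a - 1) \<or>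
    1 \<le> y \<and> (\<exists>a'\<in>{a..m}. q \<in> ballot_avoiders h m (y - 1) a')"
proof -
  have lq: "1 \<le> last q" "last q \<le> Suc m" and lq': "length q = Suc m"
    using is_perm_last[OF q] q by (auto simp: is_perm_def)
  have "is_perm (Suc (Suc m)) (append_entry q v)"
    using is_perm_append_entry[OF q v(1)] v(2) by simp
  then have lhs: "append_entry q v \<in> ballot_avoiders h (Suc m) y a \<longleftrightarrow>
      \<not> contains_231 q \<and> last q \<le> v \<and> (\<forall>k\<le>m. 0 \<le> path_height h q k) \<and>
      path_height h q m + (if last q < v then 1 else -1) = int y"
    using contains_231_append_entry[OF q v(1)]
      path_height_append_entry[OF lq'] path_height_append_entry_last[OF q] v
    by (auto simp: ballot_avoiders_def le_Suc_eq)
  have rhs: "q \<in> ballot_avoiders h m y' a' \<longleftrightarrow> \<not> contains_231 q \<and>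
      (\<forall>k\<le>m. 0 \<le> path_height h q k) \<and> path_height h q m = int y' \<and> last q + a' = Suc m" for y' a'
    using q by (simp add: ballot_avoiders_def)
  show ?thesis
  proof (cases "last q" v rule: linorder_cases)
    case less
    then have "\<exists>a'\<in>{a..m}. last q + a' = Suc m"
      using lq v by (auto intro!: bexI[of _ "Suc m - last q"])
    with less show ?thesis unfolding lhs rhs by auto
  next
    case equal
    then have "1 \<le> a" "last q + (a - 1) = Suc m" "\<not> (\<exists>a'\<in>{a..m}. last q + a' = Suc m)"
      using lq v by auto
    with equal show ?thesis unfolding lhs rhs by auto
  next
    case greater
    then have "last q + (a - 1) \<noteq> Suc m" "\<not> (\<exists>a'\<in>{a..m}. last q + a' = Suc m)"
      using lq v by auto
    with greater show ?thesis unfolding lhs rhs by auto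
  qed
qed

lemma ballot_avoiders_Suc:
  assumes "a \<le> Suc m"
  shows "ballot_avoiders h (Suc m) y a = (\<lambda>q. append_entry q (Suc (Suc m) - a)) `
    ((if 1 \<le> a then ballot_avoiders h m (Suc y) (a - 1) else {}) \<union>
     (if 1 \<le> y then (\<Union>a'\<in>{a..m}. ballot_avoiders h m (y - 1) a') else {}))"
  (is "?lhs = (\<lambda>q. append_entry q ?v) ` ?rhs")
proof -
  have v: "1 \<le> ?v" "?v + a = Suc (Suc m)" using assms by auto
  have q: "is_perm (Suc m) q" if "q \<in> ?rhs" for q
    using that by (auto simp: ballot_avoiders_def split: if_splits)
  have "p \<in> (\<lambda>q. append_entry q ?v) ` ?rhs" if p: "p \<in> ?lhs" for p
  proof -
    from p have "is_perm (Suc (Suc m)) p" and "last p = ?v"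
      by (auto simp: ballot_avoiders_def)
    then obtain q where "is_perm (Suc m) q" "p = append_entry q ?v"
      using is_perm_SucE by metis
    with p append_entry_in_ballot_avoiders_Suc[OF _ v] show ?thesis by auto
  qed
  moreover have "append_entry q ?v \<in> ?lhs" if "q \<in> ?rhs" for q
    using that append_entry_in_ballot_avoiders_Suc[OF q[OF that] v] by (auto split: if_splits)
  ultimately show ?thesis by blast
qed

fun avoider_count :: "nat \<Rightarrow> nat \<Rightarrow> nat \<Rightarrow> nat \<Rightarrow> nat" where
  "avoider_count h 0 y a = (if y = h \<and> a = 0 then 1 else 0)"
| "avoider_count h (Suc m) y a =
     (if 1 \<le> a then avoider_count h m (Suc y) (a - 1) else 0) +
     (if 1 \<le> y then (\<Sum>a'\<in>{a..m}. avoider_count h m (y - 1) a') else 0)"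

lemma card_ballot_avoiders: "card (ballot_avoiders h m y a) = avoider_count h m y a"
proof (induction m arbitrary: y a)
  case 0
  then show ?case by (simp add: ballot_avoiders_0)
next
  case (Suc m)
  show ?case
  proof (cases "a \<le> Suc m")
    case False
    then show ?thesis
      using Suc.IH[of "Suc y" "a - 1"] ballot_avoiders_eq_empty[of m "a - 1"]
        ballot_avoiders_eq_empty[of "Suc m" a] by simp
  next
    case True
    define D where "D = (if 1 \<le> a then ballot_avoiders h m (Suc y) (a - 1) else {})"
    define A where "A = (if 1 \<le> y then (\<Union>a'\<in>{a..m}. ballot_avoiders h m (y - 1) a') else {})"
    have "D \<inter> A = {}"
      by (auto simp: D_def A_def ballot_avoiders_def)
    moreover have "card A = (if 1 \<le> y then (\<Sum>a'\<in>{a..m}. avoider_count h m (y - 1) a') else 0)"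
      unfolding A_def using Suc.IH
      by (simp, subst card_UN_disjoint)
        (simp_all add: finite_ballot_avoiders, auto simp: ballot_avoiders_def)
    moreover have "card D = (if 1 \<le> a then avoider_count h m (Suc y) (a - 1) else 0)"
      using Suc.IH by (simp add: D_def)
    moreover have "card (ballot_avoiders h (Suc m) y a) = card (D \<union> A)"
      unfolding ballot_avoiders_Suc[OF True] D_def[symmetric] A_def[symmetric]
      by (rule card_image) (rule inj_on_subset[OF inj_append_entry], simp)
    ultimately show ?thesis
      by (simp add: card_Un_disjoint D_def A_def finite_ballot_avoiders)
  qed
qed

lemma G_eq_sum_avoider_count: "G n h b = (\<Sum>a\<le>n. avoider_count h n b a)"
proof -
  have "{p. hb_ballot n h b p \<and> \<not> contains_231 p} = (\<Union>a\<le>n. ballot_avoiders h n b a)"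
  proof (intro equalityI subsetI)
    fix p assume p: "p \<in> {p. hb_ballot n h b p \<and> \<not> contains_231 p}"
    then have "1 \<le> last p" "last p \<le> Suc n"
      using is_perm_last[of n p] by (auto simp: hb_ballot_def)
    with p have "p \<in> ballot_avoiders h n b (Suc n - last p)" "Suc n - last p \<le> n"
      by (auto simp: ballot_avoiders_def hb_ballot_def)
    then show "p \<in> (\<Union>a\<le>n. ballot_avoiders h n b a)" by blast
  qed (auto simp: ballot_avoiders_def hb_ballot_def)
  then have "G n h b = card (\<Union>a\<le>n. ballot_avoiders h n b a)"
    by (simp add: G_def)
  also have "\<dots> = (\<Sum>a\<le>n. card (ballot_avoiders h n b a))"
    by (rule card_UN_disjoint) (simp_all add: finite_ballot_avoiders, auto simp: ballot_avoiders_def)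
  finally show ?thesis by (simp add: card_ballot_avoiders)
qed

section \<open>Walks in the Gouyou-Beauchamps region\<close>

definition walks ::
    "('a \<Rightarrow> bool) \<Rightarrow> ('a \<Rightarrow> 'a \<Rightarrow> bool) \<Rightarrow> nat \<Rightarrow> 'a \<Rightarrow> 'a \<Rightarrow> 'a list set" where
  "walks ok step n s t = {w. length w = n + 1 \<and> w ! 0 = s \<and> w ! n = t \<and>
     (\<forall>i\<le>n. ok (w ! i)) \<and> (\<forall>i<n. step (w ! i) (w ! (i + 1)))}"

lemma walks_0: "walks ok step 0 s t = (if s = t \<and> ok s then {[s]} else {})"
  by (auto simp: walks_def length_Suc_conv)

lemma snoc_in_walks_Suc:
  "w @ [t] \<in> walks ok step (Suc n) s t' \<longleftrightarrow>
     t = t' \<and> ok t \<and> (\<exists>u. step u t \<and> w \<in> walks ok step n s u)"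
proof -
  have "w @ [t] \<in> walks ok step (Suc n) s t' \<longleftrightarrow> length w = Suc n \<and> t = t' \<and> ok t \<and>
      w \<in> walks ok step n s (w ! n) \<and> step (w ! n) t"
    by (auto simp: walks_def nth_append le_Suc_eq less_Suc_eq)
  then show ?thesis by (auto simp: walks_def)
qed

lemma walks_Suc:
  "walks ok step (Suc n) s t =
     (if ok t then (\<lambda>w. w @ [t]) ` (\<Union>u\<in>{u. step u t}. walks ok step n s u) else {})"
proof -
  have snoc: "\<exists>w'. w = w' @ [t]" if "w \<in> walks ok step (Suc n) s t" for w
  proof
    from that have l: "length w = Suc (Suc n)" and "w ! Suc n = t" by (auto simp: walks_def)
    then have "w \<noteq> []" by auto
    with l \<open>w ! Suc n = t\<close> have "last w = t" by (simp add: last_conv_nth)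
    with \<open>w \<noteq> []\<close> show "w = butlast w @ [t]" by (metis append_butlast_last_id)
  qed
  show ?thesis
  proof (intro equalityI subsetI)
    fix w assume "w \<in> walks ok step (Suc n) s t"
    moreover from this obtain w' where "w = w' @ [t]" using snoc by blast
    ultimately show
      "w \<in> (if ok t then (\<lambda>w. w @ [t]) ` (\<Union>u\<in>{u. step u t}. walks ok step n s u) else {})"
      by (auto simp: snoc_in_walks_Suc)
  qed (auto simp: snoc_in_walks_Suc split: if_splits)
qed

lemma finite_walks:
  assumes "\<And>t. finite {u. step u t}"
  shows "finite (walks ok step n s t)"
  using assms by (induction n arbitrary: t) (simp_all add: walks_0 walks_Suc)

lemma card_walks_Suc:
  assumes "\<And>t. finite {u. step u t}"
  shows "card (walks ok step (Suc n) s t) =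
    (if ok t then \<Sum>u | step u t. card (walks ok step n s u) else 0)"
proof -
  have "card ((\<lambda>w. w @ [t]) ` (\<Union>u\<in>{u. step u t}. walks ok step n s u)) =
      card (\<Union>u\<in>{u. step u t}. walks ok step n s u)"
    by (rule card_image) (simp add: inj_on_def)
  also have "\<dots> = (\<Sum>u | step u t. card (walks ok step n s u))"
    by (rule card_UN_disjoint) (simp_all add: assms finite_walks, auto simp: walks_def)
  finally show ?thesis by (simp add: walks_Suc)
qed

lemma GB_step_iff: "GB_step u (x, y) \<longleftrightarrow> u \<in> {(x, y - 1), (x, y + 1), (x - 1, y), (x + 1, y)}"
  by (cases u) (auto simp: GB_step_def)

fun gb_count :: "nat \<Rightarrow> nat \<Rightarrow> int \<Rightarrow> int \<Rightarrow> nat" where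
  "gb_count h 0 x y = (if x = int h \<and> y = 0 then 1 else 0)"
| "gb_count h (Suc n) x y = (if 0 \<le> y \<and> y \<le> x then
     gb_count h n x (y - 1) + gb_count h n x (y + 1) +
     gb_count h n (x - 1) y + gb_count h n (x + 1) y
   else 0)"

lemma card_gb_walks: "card (walks GB_region GB_step n (int h, 0) (x, y)) = gb_count h n x y"
proof (induction n arbitrary: x y)
  case 0
  then show ?case by (auto simp: walks_0 GB_region_def)
next
  case (Suc n)
  have pred:
    "{u. GB_step u t} = (case t of (x, y) \<Rightarrow> {(x, y - 1), (x, y + 1), (x - 1, y), (x + 1, y)})"
    for t by (cases t) (auto simp: GB_step_iff)
  have "finite {u. GB_step u t}" for t by (simp add: pred split: prod.split)
  moreover have "GB_region (x, y) \<longleftrightarrow> 0 \<le> y \<and> y \<le> x" by (simp add: GB_region_def)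
  ultimately show ?case
    by (simp add: card_walks_Suc pred Suc.IH)
qed

lemma H_eq_gb_count: "H n h b = gb_count h n (int b) 0"
  by (simp add: H_def GB_walks_def flip: card_gb_walks) (simp add: walks_def)

section \<open>From permutations to walks\<close>

lemma sum_mult_sum_atLeastAtMost_swap:
  fixes f g :: "nat \<Rightarrow> 'a::comm_semiring_0"
  assumes "n \<le> N"
  shows "(\<Sum>a\<le>N. g a * (\<Sum>a'=a..n. f a')) = (\<Sum>a'\<le>n. (\<Sum>a\<le>a'. g a) * f a')"
proof -
  have "(\<Sum>a\<le>N. g a * (\<Sum>a'=a..n. f a')) = (\<Sum>a\<le>N. \<Sum>a'\<in>{a'. a' \<in> {..n} \<and> a \<le> a'}. g a * f a')"
    by (simp add: sum_distrib_left atLeastAtMost_def atMost_def Int_def conj_commute)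
  also have "\<dots> = (\<Sum>a'\<le>n. \<Sum>a\<in>{a. a \<in> {..N} \<and> a \<le> a'}. g a * f a')"
    by (rule sum.swap_restrict) simp_all
  also have "\<dots> = (\<Sum>a'\<le>n. (\<Sum>a\<le>a'. g a) * f a')"
  proof (rule sum.cong)
    fix a' assume "a' \<in> {..n}"
    then have "{a. a \<in> {..N} \<and> a \<le> a'} = {..a'}" using assms by auto
    then show "(\<Sum>a\<in>{a. a \<in> {..N} \<and> a \<le> a'}. g a * f a') = (\<Sum>a\<le>a'. g a) * f a'"
      by (simp add: sum_distrib_right)
  qed simp
  finally show ?thesis .
qed

lemma sum_choose_avoider_count_Suc:
  "(\<Sum>a\<le>Suc n. (a choose c) * avoider_count h (Suc n) y a) =
     (\<Sum>a\<le>n. (a choose c) * avoider_count h n (Suc y) a) +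
     (if c = 0 then 0 else \<Sum>a\<le>n. (a choose (c - 1)) * avoider_count h n (Suc y) a) +
     (if y = 0 then 0 else
        (\<Sum>a\<le>n. (a choose c) * avoider_count h n (y - 1) a) +
        (\<Sum>a\<le>n. (a choose Suc c) * avoider_count h n (y - 1) a))"
proof -
  have descents: "(\<Sum>a\<le>Suc n. (a choose c) * (if 1 \<le> a then avoider_count h n (Suc y) (a - 1) else 0)) =
      (\<Sum>a\<le>n. (a choose c) * avoider_count h n (Suc y) a) +
      (if c = 0 then 0 else \<Sum>a\<le>n. (a choose (c - 1)) * avoider_count h n (Suc y) a)"
  proof -
    have "(\<Sum>a\<le>Suc n. (a choose c) * (if 1 \<le> a then avoider_count h n (Suc y) (a - 1) else 0)) =
        (\<Sum>a\<le>n. (Suc a choose c) * avoider_count h n (Suc y) a)"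
      by (simp add: sum.atMost_Suc_shift del: sum.atMost_Suc)
    then show ?thesis
      by (cases c) (simp_all add: distrib_right sum.distrib)
  qed
  have ascents: "(\<Sum>a\<le>Suc n. (a choose c) * (\<Sum>a'=a..n. avoider_count h n (y - 1) a')) =
      (\<Sum>a\<le>n. (a choose c) * avoider_count h n (y - 1) a) +
      (\<Sum>a\<le>n. (a choose Suc c) * avoider_count h n (y - 1) a)"
  proof -
    have "(\<Sum>a\<le>Suc n. (a choose c) * (\<Sum>a'=a..n. avoider_count h n (y - 1) a')) =
        (\<Sum>a'\<le>n. (Suc a' choose Suc c) * avoider_count h n (y - 1) a')"
      by (simp add: sum_mult_sum_atLeastAtMost_swap sum_choose_upper)
    then show ?thesis
      by (simp add: distrib_right sum.distrib)
  qed
  show ?thesis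
    using descents ascents by (simp add: distrib_left sum.distrib del: sum.atMost_Suc)
qed

lemma gb_count_outside: "\<not> (0 \<le> y \<and> y \<le> x) \<Longrightarrow> gb_count h n x y = 0"
  by (cases n) auto

lemma gb_count_eq_sum_choose:
  "gb_count h n (int (y + c)) (int c) = (\<Sum>a\<le>n. (a choose c) * avoider_count h n y a)"
proof (induction n arbitrary: y c)
  case 0
  then show ?case by auto
next
  case (Suc n)
  have IH: "gb_count h n (int y') (int c') = (\<Sum>a\<le>n. (a choose c') * avoider_count h n (y' - c') a)"
    if "c' \<le> y'" for y' c'
    using Suc.IH[of "y' - c'" c'] that by simp
  have "gb_count h n (int (y + c)) (int c - 1) =
      (if c = 0 then 0 else \<Sum>a\<le>n. (a choose (c - 1)) * avoider_count h n (Suc y) a)"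
    using IH[of "c - 1" "y + c"] by (cases c) (simp_all add: gb_count_outside of_nat_diff)
  moreover have "gb_count h n (int (y + c)) (int c + 1) =
      (if y = 0 then 0 else \<Sum>a\<le>n. (a choose Suc c) * avoider_count h n (y - 1) a)"
    using IH[of "Suc c" "y + c"] by (cases y) (simp_all add: gb_count_outside add.commute)
  moreover have "gb_count h n (int (y + c) - 1) (int c) =
      (if y = 0 then 0 else \<Sum>a\<le>n. (a choose c) * avoider_count h n (y - 1) a)"
    using IH[of c "y + c - 1"] by (cases y) (simp_all add: gb_count_outside of_nat_diff)
  moreover have
    "gb_count h n (int (y + c) + 1) (int c) = (\<Sum>a\<le>n. (a choose c) * avoider_count h n (Suc y) a)"
    using IH[of c "Suc (y + c)"] by (simp add: add.commute)
  ultimately show ?case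
    unfolding sum_choose_avoider_count_Suc by simp
qed

theorem G_eq_H: "G n h b = H n h b"
  using gb_count_eq_sum_choose[of h n b 0] by (simp add: G_eq_sum_avoider_count H_eq_gb_count)

fun line_walks :: "nat \<Rightarrow> int \<Rightarrow> int" where
  "line_walks 0 k = (if k = 0 then 1 else 0)"
| "line_walks (Suc N) k = line_walks N (k - 1) + line_walks N (k + 1)"

lemma line_walks_eq_0_if_far: "int N < \<bar>k\<bar> \<Longrightarrow> line_walks N k = 0"
  by (induction N arbitrary: k) auto

lemma line_walks_eq_0_if_odd: "odd (int N + k) \<Longrightarrow> line_walks N k = 0"
proof (induction N arbitrary: k)
  case (Suc N)
  then have "odd (int N + (k - 1))" "odd (int N + (k + 1))" by simp_all
  with Suc.IH show ?case by simp
qed auto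

lemma line_walks_uminus: "line_walks N (- k) = line_walks N k"
proof (induction N arbitrary: k)
  case (Suc N)
  have "- k - 1 = - (k + 1)" "- k + 1 = - (k - 1)" by simp_all
  with Suc.IH show ?case by (simp only: line_walks.simps)
qed simp

lemma line_walks_binomial: "line_walks N (2 * int j - int N) = int (N choose j)"
proof (induction N arbitrary: j)
  case 0
  then show ?case by (cases j) auto
next
  case (Suc N)
  show ?case
  proof (cases j)
    case 0
    have "line_walks N (- int N - 2) = 0" by (rule line_walks_eq_0_if_far) simp
    with Suc.IH[of 0] 0 show ?thesis by (simp add: algebra_simps)
  next
    case (Suc i)
    have "line_walks (Suc N) (2 * int j - int (Suc N)) =
        line_walks N (2 * int i - int N) + line_walks N (2 * int (Suc i) - int N)"
      using Suc by (simp add: algebra_simps)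
    with Suc.IH[of i] Suc.IH[of "Suc i"] Suc show ?thesis by simp
  qed
qed

text \<open>By the reflection principle, the number of \<open>+1/-1\<close> walks with \<open>N\<close> steps from \<open>a\<close> to
  \<open>b\<close> that never go below \<open>0\<close>.\<close>
definition halfline_walks :: "nat \<Rightarrow> int \<Rightarrow> int \<Rightarrow> int" where
  "halfline_walks N a b = line_walks N (b - a) - line_walks N (b + a + 2)"

text \<open>In the coordinates \<open>x - y\<close> and \<open>x + y + 2\<close> every GB step moves both coordinates by
  \<open>+1/-1\<close>, and the GB region says that both stay nonnegative and never meet. A GB walk from the
  origin is thus a pair of non-intersecting half-line walks started at \<open>0\<close> and \<open>2\<close>, counted by
  the Lindstroem-Gessel-Viennot determinant below.\<close>
definition gb_formula :: "nat \<Rightarrow> int \<Rightarrow> int \<Rightarrow> int" where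
  "gb_formula N x y = halfline_walks N 0 (x - y) * halfline_walks N 2 (x + y + 2)
     - halfline_walks N 0 (x + y + 2) * halfline_walks N 2 (x - y)"

lemma halfline_walks_Suc:
  "halfline_walks (Suc N) a b = halfline_walks N a (b - 1) + halfline_walks N a (b + 1)"
  by (simp add: halfline_walks_def algebra_simps)

lemma gb_formula_Suc:
  "gb_formula (Suc N) x y =
     gb_formula N x (y - 1) + gb_formula N x (y + 1) + gb_formula N (x - 1) y + gb_formula N (x + 1) y"
proof -
  have "x - (y - 1) = x - y + 1" "x + (y - 1) + 2 = x + y + 2 - 1"
    "x - (y + 1) = x - y - 1" "x + (y + 1) + 2 = x + y + 2 + 1"
    "x - 1 - y = x - y - 1" "x - 1 + y + 2 = x + y + 2 - 1"
    "x + 1 - y = x - y + 1" "x + 1 + y + 2 = x + y + 2 + 1" by simp_all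
  then show ?thesis
    unfolding gb_formula_def halfline_walks_Suc by (simp add: algebra_simps)
qed

lemma gb_formula_below: "gb_formula N x (-1) = 0"
  by (simp add: gb_formula_def add.commute)

lemma gb_formula_above: "gb_formula N x (x + 1) = 0"
  using line_walks_uminus[of N 1] line_walks_uminus[of N 3]
  by (simp add: gb_formula_def halfline_walks_def add.commute)

lemma gb_count_0_eq_gb_formula:
  assumes "0 \<le> y \<and> y \<le> x \<or> y = -1 \<or> y = x + 1"
  shows "int (gb_count 0 N x y) = gb_formula N x y"
  using assms
proof (induction N arbitrary: x y)
  case 0
  then show ?case
    using gb_formula_below gb_formula_above by (auto simp: gb_formula_def halfline_walks_def)
next
  case (Suc N)
  show ?case
  proof (cases "0 \<le> y \<and> y \<le> x")
    case True
    have "int (gb_count 0 N x (y - 1)) = gb_formula N x (y - 1)"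
      "int (gb_count 0 N x (y + 1)) = gb_formula N x (y + 1)"
      "int (gb_count 0 N (x - 1) y) = gb_formula N (x - 1) y"
      "int (gb_count 0 N (x + 1) y) = gb_formula N (x + 1) y"
      using True by (auto intro!: Suc.IH)
    with True show ?thesis by (simp add: gb_formula_Suc)
  next
    case False
    with Suc.prems show ?thesis
      using gb_formula_below gb_formula_above by auto
  qed
qed

section \<open>Ballot permutations and Catalan numbers\<close>

definition gb_potential :: "nat \<Rightarrow> int \<Rightarrow> int" where
  "gb_potential N x =
     line_walks N x * line_walks N x + line_walks N (x + 2) * line_walks N (x + 2)
     + line_walks N (x - 2) * line_walks N (x + 4) - line_walks N x * line_walks N (x + 2)
     - line_walks N (x - 2) * line_walks N (x + 2) - line_walks N x * line_walks N (x + 4)"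

lemma gb_formula_x_axis: "gb_formula N x 0 = gb_potential N x - gb_potential N (x + 2)"
proof -
  have "x + 2 - 2 = x" "x + 2 + 2 = x + 4" "x + 2 + 4 = x + 6" "x + 2 + 2 + 2 = x + 6" by simp_all
  then show ?thesis
    by (simp add: gb_formula_def halfline_walks_def gb_potential_def algebra_simps)
qed

lemma sum_gb_formula_x_axis:
  "(\<Sum>b<K. gb_formula N (int b) 0) =
     gb_potential N 0 + gb_potential N 1 - gb_potential N (int K) - gb_potential N (int K + 1)"
proof (induction K)
  case (Suc K)
  then show ?case by (simp add: gb_formula_x_axis add.commute)
qed simp

lemma gb_potential_eq_0_if_far: "int N < x \<Longrightarrow> gb_potential N x = 0"
  by (simp add: gb_potential_def line_walks_eq_0_if_far)

lemma gb_potential_0: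
  "gb_potential N 0 = (line_walks N 0 - line_walks N 2) * (line_walks N 0 - line_walks N 4)"
  using line_walks_uminus[of N 2] by (simp add: gb_potential_def algebra_simps)

lemma gb_potential_1: "gb_potential N 1 = (line_walks N 1 - line_walks N 3)\<^sup>2"
  using line_walks_uminus[of N 1] by (simp add: gb_potential_def algebra_simps power2_eq_square)

lemma card_ballot_perm_231_eq_sum_G:
  "card {p. ballot_perm (Suc N) p \<and> \<not> contains_231 p} = (\<Sum>b\<le>N. G N 0 b)"
proof -
  have "{p. ballot_perm (Suc N) p \<and> \<not> contains_231 p} =
      (\<Union>b\<le>N. {p. hb_ballot N 0 b p \<and> \<not> contains_231 p})"
  proof (intro equalityI subsetI)
    fix p assume p: "p \<in> {p. ballot_perm (Suc N) p \<and> \<not> contains_231 p}"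
    then have "0 \<le> path_height 0 p N" by (simp add: ballot_perm_def)
    moreover have "path_height 0 p N \<le> int N" using path_height_le[of 0 p N] by simp
    ultimately have "hb_ballot N 0 (nat (path_height 0 p N)) p" "nat (path_height 0 p N) \<le> N"
      using p by (auto simp: hb_ballot_def ballot_perm_def)
    with p show "p \<in> (\<Union>b\<le>N. {p. hb_ballot N 0 b p \<and> \<not> contains_231 p})" by blast
  qed (auto simp: hb_ballot_def ballot_perm_def)
  also have "card \<dots> = (\<Sum>b\<le>N. card {p. hb_ballot N 0 b p \<and> \<not> contains_231 p})"
  proof (rule card_UN_disjoint)
    show "\<forall>b\<in>{..N}. finite {p. hb_ballot N 0 b p \<and> \<not> contains_231 p}"
      by (auto intro: finite_subset[OF _ finite_is_perm[of "Suc N"]] simp: hb_ballot_def)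
  qed (auto simp: hb_ballot_def)
  finally show ?thesis by (simp add: G_def)
qed

lemma card_ballot_perm_231:
  "real (card {p. ballot_perm (Suc N) p \<and> \<not> contains_231 p}) =
     of_int (gb_potential N 0) + of_int (gb_potential N 1)"
proof -
  have "int (G N 0 b) = gb_formula N (int b) 0" for b
    using gb_count_0_eq_gb_formula[of 0 "int b" N] by (simp add: G_eq_H H_eq_gb_count)
  then have "int (card {p. ballot_perm (Suc N) p \<and> \<not> contains_231 p}) =
      (\<Sum>b<Suc N. gb_formula N (int b) 0)"
    by (simp add: card_ballot_perm_231_eq_sum_G lessThan_Suc_atMost)
  also have "\<dots> = gb_potential N 0 + gb_potential N 1"
    using gb_potential_eq_0_if_far[of N "int (Suc N)"] gb_potential_eq_0_if_far[of N "int (Suc N) + 1"]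
    by (simp add: sum_gb_formula_x_axis del: of_nat_Suc)
  finally show ?thesis
    by (metis of_int_add of_int_of_nat_eq)
qed

lemma catalan_eq_diff_choose: "catalan m = real (2 * m choose m) - real (2 * m choose Suc m)"
proof -
  have "Suc m * (2 * m choose Suc m) = (2 * m - m) * (2 * m choose m)"
    by (simp only: binomial_absorption binomial_absorb_comp)
  then have "Suc m * (2 * m choose Suc m) = m * (2 * m choose m)"
    by simp
  then have "real (2 * m choose Suc m) = real m * real (2 * m choose m) / (real m + 1)"
    by (simp add: field_simps flip: of_nat_mult)
  then show ?thesis
    by (simp add: catalan_def field_simps)
qed

lemma catalan_Suc_eq_diff_choose_odd:
  "catalan (Suc m) = real (Suc (2 * m) choose Suc m) - real (Suc (2 * m) choose Suc (Suc m))"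
proof -
  have "Suc (2 * m) choose m = Suc (2 * m) choose Suc m"
    using Suc_times_binomial_add[of m m] by (simp only: mult_cancel1 mult_2) simp
  then show ?thesis
    using catalan_eq_diff_choose[of "Suc m"] by simp
qed

lemma catalan_Suc_eq_diff_choose_even:
  "catalan (Suc m) = real (2 * m choose m) - real (2 * m choose Suc (Suc m))"
  using catalan_Suc_eq_diff_choose_odd[of m] by simp

lemma card_ballot_perm_231_odd_length:
  "real (card {p. ballot_perm (Suc (2 * m)) p \<and> \<not> contains_231 p}) = catalan m * catalan (Suc m)"
proof -
  have walks: "line_walks (2 * m) (2 * int i) = int (2 * m choose (m + i))" for i
  proof -
    have "2 * int (m + i) - int (2 * m) = 2 * int i" by simp
    then show ?thesis using line_walks_binomial[of "2 * m" "m + i"] by metis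
  qed
  have "line_walks (2 * m) k = 0" if "odd k" for k
    using that by (intro line_walks_eq_0_if_odd) simp
  then have "gb_potential (2 * m) 1 = 0"
    by (simp add: gb_potential_1)
  moreover have "gb_potential (2 * m) 0 = (int (2 * m choose m) - int (2 * m choose Suc m)) *
      (int (2 * m choose m) - int (2 * m choose Suc (Suc m)))"
    using walks[of 0] walks[of 1] walks[of 2] by (simp add: gb_potential_0)
  ultimately have "real (card {p. ballot_perm (Suc (2 * m)) p \<and> \<not> contains_231 p}) =
      (real (2 * m choose m) - real (2 * m choose Suc m)) *
      (real (2 * m choose m) - real (2 * m choose Suc (Suc m)))"
    by (simp add: card_ballot_perm_231)
  then show ?thesis
    by (simp only: catalan_eq_diff_choose[of m] catalan_Suc_eq_diff_choose_even)
qed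

lemma card_ballot_perm_231_even_length:
  "real (card {p. ballot_perm (Suc (Suc (2 * m))) p \<and> \<not> contains_231 p}) =
     catalan (Suc m) * catalan (Suc m)"
proof -
  have walks: "line_walks (Suc (2 * m)) (2 * int i + 1) = int (Suc (2 * m) choose (Suc m + i))" for i
  proof -
    have "2 * int (Suc m + i) - int (Suc (2 * m)) = 2 * int i + 1" by simp
    then show ?thesis using line_walks_binomial[of "Suc (2 * m)" "Suc m + i"] by metis
  qed
  have "line_walks (Suc (2 * m)) k = 0" if "even k" for k
    using that by (intro line_walks_eq_0_if_odd) (simp del: line_walks.simps(2))
  then have "gb_potential (Suc (2 * m)) 0 = 0"
    by (simp add: gb_potential_0 del: line_walks.simps(2))
  moreover have "gb_potential (Suc (2 * m)) 1 =
      (int (Suc (2 * m) choose Suc m) - int (Suc (2 * m) choose Suc (Suc m)))\<^sup>2"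
    using walks[of 0] walks[of 1] by (simp add: gb_potential_1 del: line_walks.simps(2))
  ultimately have "real (card {p. ballot_perm (Suc (Suc (2 * m))) p \<and> \<not> contains_231 p}) =
      (real (Suc (2 * m) choose Suc m) - real (Suc (2 * m) choose Suc (Suc m)))\<^sup>2"
    by (simp add: card_ballot_perm_231 del: line_walks.simps(2))
  then show ?thesis
    by (simp only: catalan_Suc_eq_diff_choose_odd power2_eq_square)
qed

theorem theorem4p6:
  shows "(\<forall>n h b. G n h b = H n h b) \<and>
         (\<forall>n\<ge>1. real (card {p. ballot_perm n p \<and> \<not> contains_231 p}) =
                  catalan (n div 2) * catalan ((n + 1) div 2))"
proof (intro conjI allI impI)
  fix n h b
  show "G n h b = H n h b" by (rule G_eq_H)
next
  fix n :: nat
  assume "n \<ge> 1"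
  then have "\<exists>m. n = Suc (2 * m) \<or> n = Suc (Suc (2 * m))" by presburger
  then obtain m where "n = Suc (2 * m) \<or> n = Suc (Suc (2 * m))" by blast
  then show "real (card {p. ballot_perm n p \<and> \<not> contains_231 p}) =
      catalan (n div 2) * catalan ((n + 1) div 2)"
    using card_ballot_perm_231_odd_length[of m] card_ballot_perm_231_even_length[of m] by auto
qed

end
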